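(* Let $X=\mathbb T=\mathbb R/\mathbb Z=G/\Gamma$ with $G=\mathbb R$, $\Gamma=\mathbb Z$, let $\mu$ be Haar measure on $X$, let $\rho_t(v)=tv$ for $v\in\mathbb R$, $t\in\mathbb R$, and let $x_0\in X$. Then there exists a Borel probability measure $\nu$ on $\mathbb R$ such that the family of measures $(\mu_t)_{t\ge0}$, defined by $\int_Xf\,d\mu_t=\int_{\mathbb R}f(ty+x_0)\,d\nu(y)$ for $f\in C(X)$, is weakly equidistributed but not equidistributed on $(X,\mu)$.
   Context: A family $(\mu_t)_{t\ge0}$ of probability measures on $X$ is equidistributed if $\int f\,d\mu_t\to\int f\,d\mu$ as $t\to\infty$ for all $f\in C(X)$; it is weakly equidistributed if there is a set $A\subset[0,\infty)$ with $\lim_{T\to\infty}\lambda(A\cap[0,T])/T=1$ ($\lambda$ Lebesgue measure) such that $\int f\,d\mu_t\to\int f\,d\mu$ as $t\to\infty$ with $t\in A$, for all $f\in C(X)$. *)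

theory Defs
  imports "HOL-Probability.Probability"
begin

text \<open>Functions in C(X), X = R/Z, are represented as continuous 1-periodic
  real functions on R.\<close>
definition circle_fun :: "(real \<Rightarrow> real) \<Rightarrow> bool" where
  "circle_fun f \<longleftrightarrow> continuous_on UNIV f \<and> (\<forall>x. f (x + 1) = f x)"

definition haar_int :: "(real \<Rightarrow> real) \<Rightarrow> real" where
  "haar_int f = (LINT x:{0..1}|lborel. f x)"

text \<open>The integral of f against mu_t: the pushforward of nu under y |-> t y + x0 mod Z.\<close>
definition mu_int :: "real measure \<Rightarrow> real \<Rightarrow> real \<Rightarrow> (real \<Rightarrow> real) \<Rightarrow> real" where
  "mu_int \<nu> x0 t f = (\<integral>y. f (t * y + x0) \<partial>\<nu>)"

definition equidistributed :: "real measure \<Rightarrow> real \<Rightarrow> bool" where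
  "equidistributed \<nu> x0 \<longleftrightarrow>
     (\<forall>f. circle_fun f \<longrightarrow> ((\<lambda>t. mu_int \<nu> x0 t f) \<longlongrightarrow> haar_int f) at_top)"

definition weakly_equidistributed :: "real measure \<Rightarrow> real \<Rightarrow> bool" where
  "weakly_equidistributed \<nu> x0 \<longleftrightarrow>
     (\<exists>A. A \<subseteq> {0..} \<and> A \<in> sets lebesgue \<and>
        ((\<lambda>T. measure lebesgue (A \<inter> {0..T}) / T) \<longlongrightarrow> 1) at_top \<and>
        (\<forall>f. circle_fun f \<longrightarrow>
           ((\<lambda>t. mu_int \<nu> x0 t f) \<longlongrightarrow> haar_int f) (inf at_top (principal A))))"

end

(*
  For an atomless probability measure \<nu> on \<real>, Wiener's lemma says that the Cesaro means of
  |\<nu>^(2\<pi>kt)|^2 in t tend to 0 for every k \<noteq> 0. By the Koopman-von Neumann lemma, applied to a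
  weighted sum over k, all these functions tend to 0 along one set A of density one, and Weyl's
  criterion then gives convergence of \<mu>\<^sub>t to Haar measure along A. So every atomless \<nu> is weakly
  equidistributed. Equidistribution fails for the image of Lebesgue measure on [0, 1] under
  x \<mapsto> \<Sum>\<^sub>k \<lfloor>2^k x\<rfloor> / 2^((k+3)^2): it is atomless, but at the times t = 2^((j+3)^2) almost all
  of its mass lies within 1/16 of \<int>/t.
*)

theory Submission
  imports Defs
begin

definition fourier_sq :: "real measure \<Rightarrow> real \<Rightarrow> real" where
  "fourier_sq M s = (\<integral>y. cos (s * y) \<partial>M)\<^sup>2 + (\<integral>y. sin (s * y) \<partial>M)\<^sup>2"

definition cesaro_mean :: "(real \<Rightarrow> real) \<Rightarrow> real \<Rightarrow> real" where
  "cesaro_mean f T = (LBINT t:{0..T}. f t) / T"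

lemma fourier_sq_minus [simp]: "fourier_sq M (- s) = fourier_sq M s"
  by (simp add: fourier_sq_def)

lemma (in real_distribution) integrable_cos_sin [simp]:
  "integrable M (\<lambda>y. cos (s * y))" "integrable M (\<lambda>y. sin (s * y))"
  by (auto intro!: integrable_const_bound[where B = 1])

lemma (in real_distribution) abs_integral_cos_sin_le_sqrt_fourier_sq:
  "\<bar>\<integral>y. cos (s * y) \<partial>M\<bar> \<le> sqrt (fourier_sq M s)"
  "\<bar>\<integral>y. sin (s * y) \<partial>M\<bar> \<le> sqrt (fourier_sq M s)"
  unfolding fourier_sq_def by (auto intro!: real_le_rsqrt)

lemma set_integrable_Icc_bounded:
  fixes f :: "real \<Rightarrow> real"
  assumes "f \<in> borel_measurable borel" and "\<And>t. \<bar>f t\<bar> \<le> B"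
  shows "set_integrable lborel {a..b} f"
  unfolding set_integrable_def
  by (rule integrableI_bounded_set[where A = "{a..b}" and B = B])
    (use assms in \<open>auto simp: emeasure_lborel_Icc_eq indicator_def\<close>)

lemma set_integral_sum:
  fixes f :: "'i \<Rightarrow> 'a \<Rightarrow> real"
  assumes "\<And>i. i \<in> I \<Longrightarrow> set_integrable M A (f i)"
  shows "(LINT x:A|M. \<Sum>i\<in>I. f i x) = (\<Sum>i\<in>I. LINT x:A|M. f i x)"
  using assms unfolding set_lebesgue_integral_def set_integrable_def
  by (simp add: sum_distrib_left integral_sum)

lemma cesaro_mean_nonneg:
  assumes "\<And>t. 0 \<le> f t"
  shows "0 \<le> cesaro_mean f T"
proof -
  have "0 \<le> (LBINT t:{0..T}. f t)"
    unfolding set_lebesgue_integral_def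
    by (intro Bochner_Integration.integral_nonneg) (simp add: assms indicator_def)
  then show ?thesis
    by (cases "0 \<le> T") (auto simp: cesaro_mean_def set_lebesgue_integral_def)
qed

lemma cesaro_mean_le:
  assumes [measurable]: "f \<in> borel_measurable borel" and nonneg: "\<And>t. 0 \<le> f t" and "\<And>t. f t \<le> B"
  shows "cesaro_mean f T \<le> B"
proof (cases "0 < T")
  case True
  have "(LBINT t:{0..T}. f t) \<le> (LBINT t:{0..T}. B)"
    using assms
    by (intro set_integral_mono set_integrable_Icc_bounded[where B = B] set_integrable_Icc_bounded[where B = "\<bar>B\<bar>"])
      (auto simp: abs_of_nonneg)
  then show ?thesis
    using True by (simp add: cesaro_mean_def set_lebesgue_integral_def pos_divide_le_eq mult.commute)
next
  case False
  then have "cesaro_mean f T = 0"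
    by (cases "T = 0") (auto simp: cesaro_mean_def set_lebesgue_integral_def)
  then show ?thesis
    using nonneg[of 0] assms(3)[of 0] by linarith
qed

lemma set_integral_cos_mult:
  fixes c T :: real
  assumes "0 \<le> T"
  shows "(LBINT t:{0..T}. cos (c * t)) = (if c = 0 then T else sin (c * T) / c)"
proof -
  have "(LBINT t=ereal 0..ereal T. cos (c * t)) = T - 0" if "c = 0"
    using assms that by (intro interval_integral_FTC_finite continuous_intros)
      (auto intro!: derivative_eq_intros simp: has_real_derivative_iff_has_vector_derivative[symmetric])
  moreover have "(LBINT t=ereal 0..ereal T. cos (c * t)) = sin (c * T) / c - sin (c * 0) / c" if "c \<noteq> 0"
    using assms that by (intro interval_integral_FTC_finite continuous_intros)
      (auto intro!: derivative_eq_intros simp: has_real_derivative_iff_has_vector_derivative[symmetric])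
  ultimately show ?thesis
    using assms by (simp add: interval_integral_Icc[symmetric])
qed

lemma abs_cesaro_mean_cos_le_1:
  fixes c T :: real
  assumes "0 < T"
  shows "\<bar>cesaro_mean (\<lambda>t. cos (c * t)) T\<bar> \<le> 1"
proof -
  have "\<bar>sin (c * T) / c\<bar> \<le> T" if "c \<noteq> 0"
    using abs_sin_x_le_abs_x[of "c * T"] that assms by (simp add: abs_mult divide_simps mult.commute)
  then show ?thesis
    using assms by (simp add: cesaro_mean_def set_integral_cos_mult)
qed

lemma cesaro_mean_cos_tendsto_0:
  fixes c :: real
  assumes "c \<noteq> 0"
  shows "(cesaro_mean (\<lambda>t. cos (c * t)) \<longlongrightarrow> 0) at_top"
proof -
  have "((\<lambda>T. sin (c * T) / c / T) \<longlongrightarrow> 0) at_top"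
  proof (rule tendsto_0_le[where K = 1])
    show "((\<lambda>T. 1 / (\<bar>c\<bar> * T)) \<longlongrightarrow> 0) at_top"
      using assms by real_asymp
    show "\<forall>\<^sub>F T in at_top. norm (sin (c * T) / c / T) \<le> norm (1 / (\<bar>c\<bar> * T)) * 1"
      using eventually_gt_at_top[of 0]
      by eventually_elim (use assms in \<open>simp add: abs_mult divide_simps\<close>)
  qed
  moreover have "\<forall>\<^sub>F T in at_top. sin (c * T) / c / T = cesaro_mean (\<lambda>t. cos (c * t)) T"
    using eventually_ge_at_top[of 0]
    by eventually_elim (simp add: cesaro_mean_def set_integral_cos_mult assms)
  ultimately show ?thesis
    by (rule Lim_transform_eventually)
qed

lemma (in prob_space) set_integral_Icc_integral_swap:
  fixes f :: "real \<Rightarrow> 'a \<Rightarrow> real"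
  assumes f [measurable]: "case_prod f \<in> borel_measurable (lborel \<Otimes>\<^sub>M M)"
    and bounded: "\<And>t x. \<bar>f t x\<bar> \<le> B"
  shows "(LBINT t:{a..b}. \<integral>x. f t x \<partial>M) = (\<integral>x. (LBINT t:{a..b}. f t x) \<partial>M)"
proof -
  interpret pair_sigma_finite lborel M ..
  have "emeasure (lborel \<Otimes>\<^sub>M M) ({a..b} \<times> space M) = emeasure lborel {a..b} * emeasure M (space M)"
    by (rule sigma_finite_measure.emeasure_pair_measure_Times) (auto intro: prob_space_imp_sigma_finite prob_space_axioms)
  then have "integrable (lborel \<Otimes>\<^sub>M M) (\<lambda>(t, x). indicator {a..b} t * f t x)"
    by (intro integrableI_bounded_set[where B = B and A = "{a..b} \<times> space M"])
      (auto intro!: AE_I2 simp: emeasure_space_1 emeasure_lborel_Icc_eq bounded abs_mult indicator_def space_pair_measure)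
  then show ?thesis
    unfolding set_lebesgue_integral_def by (simp add: Fubini_integral)
qed

context real_distribution
begin

lemma fourier_sq_measurable [measurable]: "fourier_sq M \<in> borel_measurable borel"
  unfolding fourier_sq_def[abs_def] by measurable

lemma fourier_sq_le_2: "fourier_sq M s \<le> 2"
proof -
  have "\<bar>\<integral>y. f y \<partial>M\<bar> \<le> 1" if "integrable M f" "\<And>y. \<bar>f y\<bar> \<le> 1" for f :: "real \<Rightarrow> real"
  proof -
    have "\<bar>\<integral>y. f y \<partial>M\<bar> \<le> (\<integral>y. \<bar>f y\<bar> \<partial>M)"
      using integral_norm_bound[of M f] by simp
    also have "\<dots> \<le> 1"
      using that by (intro integral_le_const) auto
    finally show ?thesis .
  qed
  then have "\<bar>\<integral>y. cos (s * y) \<partial>M\<bar> \<le> 1" "\<bar>\<integral>y. sin (s * y) \<partial>M\<bar> \<le> 1"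
    by simp_all
  then show ?thesis
    unfolding fourier_sq_def by (simp add: abs_square_le_1[symmetric] add_mono[where b = 1 and d = 1, simplified])
qed

lemma fourier_sq_eq_integral_pair:
  "fourier_sq M s = (\<integral>p. cos (s * (fst p - snd p)) \<partial>(M \<Otimes>\<^sub>M M))"
proof -
  interpret pair_prob_space M M ..
  have "(\<integral>p. cos (s * (fst p - snd p)) \<partial>(M \<Otimes>\<^sub>M M)) = (\<integral>y. \<integral>z. cos (s * (y - z)) \<partial>M \<partial>M)"
    by (subst integral_fst'[symmetric]) (auto intro!: integrable_const_bound[where B = 1])
  also have "\<dots> = (\<integral>y. cos (s * y) * (\<integral>z. cos (s * z) \<partial>M) + sin (s * y) * (\<integral>z. sin (s * z) \<partial>M) \<partial>M)"
    by (simp add: right_diff_distrib cos_diff)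
  also have "\<dots> = fourier_sq M s"
    by (simp add: fourier_sq_def power2_eq_square)
  finally show ?thesis ..
qed

lemma AE_pair_fst_neq_snd:
  assumes atomless: "\<And>y. measure M {y} = 0"
  shows "AE p in M \<Otimes>\<^sub>M M. fst p \<noteq> snd p"
proof -
  let ?D = "{p \<in> space (M \<Otimes>\<^sub>M M). fst p = snd p}"
  have D [measurable]: "?D \<in> sets (M \<Otimes>\<^sub>M M)"
    by measurable
  have "emeasure (M \<Otimes>\<^sub>M M) ?D = (\<integral>\<^sup>+ y. emeasure M {y} \<partial>M)"
    by (subst emeasure_pair_measure_alt[OF D])
      (auto intro!: nn_integral_cong arg_cong[where f = "emeasure M"] simp: space_pair_measure)
  also have "\<dots> = 0"
    using atomless by (simp add: emeasure_eq_measure)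
  finally show ?thesis
    using D by (intro AE_I[where N = ?D]) auto
qed

text \<open>Averaging \<open>fourier_sq M (a t) = \<integral>\<integral> cos (a t (y - z))\<close> over \<open>t\<close> gives, for
  \<open>y \<noteq> z\<close>, a Cesaro mean of a nonconstant cosine, which tends to \<open>0\<close>; the diagonal is null.\<close>

lemma cesaro_mean_fourier_sq_tendsto_0:
  assumes atomless: "\<And>y. measure M {y} = 0" and "a \<noteq> 0"
  shows "(cesaro_mean (\<lambda>t. fourier_sq M (a * t)) \<longlongrightarrow> 0) at_top"
proof -
  interpret pair_prob_space M M ..
  define g where "g T p = cesaro_mean (\<lambda>t. cos (a * (fst p - snd p) * t)) T" for T p
  have "((\<lambda>T. \<integral>p. g T p \<partial>(M \<Otimes>\<^sub>M M)) \<longlongrightarrow> (\<integral>p. 0 \<partial>(M \<Otimes>\<^sub>M M))) at_top"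
  proof (rule integral_dominated_convergence_at_top[where w = "\<lambda>_. 1"])
    show "(g T) \<in> borel_measurable (M \<Otimes>\<^sub>M M)" for T
      unfolding g_def cesaro_mean_def set_lebesgue_integral_def by measurable
    show "AE p in M \<Otimes>\<^sub>M M. ((\<lambda>T. g T p) \<longlongrightarrow> 0) at_top"
      using AE_pair_fst_neq_snd[OF atomless]
      by eventually_elim (use \<open>a \<noteq> 0\<close> in \<open>auto simp: g_def intro!: cesaro_mean_cos_tendsto_0\<close>)
    show "\<forall>\<^sub>F T in at_top. AE p in M \<Otimes>\<^sub>M M. norm (g T p) \<le> 1"
      using eventually_gt_at_top[of 0]
      by eventually_elim (intro AE_I2, unfold g_def real_norm_def, rule abs_cesaro_mean_cos_le_1)
  qed auto
  moreover have "(\<integral>p. g T p \<partial>(M \<Otimes>\<^sub>M M)) = cesaro_mean (\<lambda>t. fourier_sq M (a * t)) T" for T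
  proof -
    have "(LBINT t:{0..T}. fourier_sq M (a * t))
        = (LBINT t:{0..T}. \<integral>p. cos (a * (fst p - snd p) * t) \<partial>(M \<Otimes>\<^sub>M M))"
      by (simp add: fourier_sq_eq_integral_pair mult_ac)
    also have "\<dots> = (\<integral>p. (LBINT t:{0..T}. cos (a * (fst p - snd p) * t)) \<partial>(M \<Otimes>\<^sub>M M))"
      by (rule P.set_integral_Icc_integral_swap[where B = 1]) auto
    finally show ?thesis
      by (simp add: g_def cesaro_mean_def)
  qed
  ultimately show ?thesis
    by simp
qed

end

lemma borel_measurable_antimono:
  fixes f :: "real \<Rightarrow> real"
  assumes "antimono f"
  shows "f \<in> borel_measurable borel"
proof -
  have "(\<lambda>t. - f t) \<in> borel_measurable borel"
    using assms by (intro borel_measurable_mono) (auto simp: mono_def antimono_def)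
  then show ?thesis
    by (metis borel_measurable_uminus_eq)
qed

text \<open>Take the square root of the tail supremum of \<open>a\<close>, made strictly positive.\<close>

lemma exists_antimono_tendsto_0_slower:
  fixes a :: "real \<Rightarrow> real"
  assumes nonneg: "\<And>t. 0 \<le> a t" and bdd: "bdd_above (range a)" and lim: "(a \<longlongrightarrow> 0) at_top"
  shows "\<exists>d. antimono d \<and> (\<forall>t. 0 < d t) \<and> (d \<longlongrightarrow> 0) at_top \<and> ((\<lambda>t. a t / d t) \<longlongrightarrow> 0) at_top"
proof -
  define b where "b T = (SUP s\<in>{T..}. a s)" for T
  define c where "c T = b T + 1 / (max T 0 + 1)" for T
  have bdd': "bdd_above (a ` S)" for S
    using bdd by (meson bdd_above_mono image_mono subset_UNIV)
  have a_le_b: "a T \<le> b T" for T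
    unfolding b_def by (rule cSUP_upper[OF _ bdd']) auto
  have b_nonneg: "0 \<le> b T" for T
    using a_le_b[of T] nonneg[of T] by simp
  have "antimono b"
    unfolding b_def antimono_def by (auto intro!: cSUP_subset_mono bdd')
  moreover have "antimono (\<lambda>T. 1 / (max T 0 + 1 :: real))"
    by (auto simp: antimono_def divide_simps)
  ultimately have "antimono c"
    unfolding c_def antimono_def by (auto intro!: add_mono)
  have c_pos: "0 < c T" for T
    unfolding c_def using b_nonneg[of T] by (intro add_nonneg_pos) auto
  have "(b \<longlongrightarrow> 0) at_top"
  proof (rule order_tendstoI)
    show "\<forall>\<^sub>F T in at_top. e < b T" if "e < 0" for e
      using b_nonneg that by (intro always_eventually allI) (auto intro: less_le_trans)
    show "\<forall>\<^sub>F T in at_top. b T < e" if "0 < e" for e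
    proof -
      obtain T0 where T0: "\<And>s. s \<ge> T0 \<Longrightarrow> a s < e / 2"
        using order_tendstoD(2)[OF lim, of "e / 2"] \<open>0 < e\<close> by (auto simp: eventually_at_top_linorder)
      have bT: "b T \<le> e / 2" if "T \<ge> T0" for T
        unfolding b_def using that T0 by (intro cSUP_least) (auto intro: less_imp_le)
      show ?thesis
        by (rule eventually_mono[OF eventually_ge_at_top[of T0]]) (use bT \<open>0 < e\<close> in fastforce)
    qed
  qed
  moreover have "((\<lambda>T. 1 / (max T 0 + 1 :: real)) \<longlongrightarrow> 0) at_top"
  proof (rule Lim_transform_eventually)
    show "((\<lambda>T. 1 / (T + 1 :: real)) \<longlongrightarrow> 0) at_top"
      by real_asymp
    show "\<forall>\<^sub>F T in at_top. 1 / (T + 1) = 1 / (max T 0 + 1 :: real)"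
      using eventually_ge_at_top[of 0] by eventually_elim simp
  qed
  ultimately have c_lim: "(c \<longlongrightarrow> 0) at_top"
    unfolding c_def[abs_def] using tendsto_add by fastforce
  have sqrt_c_lim: "((\<lambda>T. sqrt (c T)) \<longlongrightarrow> 0) at_top"
    using tendsto_real_sqrt[OF c_lim] by simp
  have "((\<lambda>T. a T / sqrt (c T)) \<longlongrightarrow> 0) at_top"
  proof (rule tendsto_sandwich[OF _ _ tendsto_const sqrt_c_lim])
    have "a T / sqrt (c T) \<le> c T / sqrt (c T)" for T
      using a_le_b[of T] c_pos[of T] b_nonneg[of T] unfolding c_def
      by (intro divide_right_mono add_increasing2) (auto simp: add_pos_nonneg)
    then show "\<forall>\<^sub>F T in at_top. a T / sqrt (c T) \<le> sqrt (c T)"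
      using c_pos by (simp add: real_div_sqrt less_imp_le)
  qed (use nonneg c_pos in \<open>simp add: less_imp_le\<close>)
  moreover have "antimono (\<lambda>T. sqrt (c T))"
    using \<open>antimono c\<close> by (auto simp: antimono_def)
  ultimately show ?thesis
    using c_pos sqrt_c_lim by (intro exI[of _ "\<lambda>T. sqrt (c T)"]) auto
qed

text \<open>Markov's inequality on \<open>[0, T]\<close>: off the set \<open>{H \<le> d}\<close>, \<open>H \<ge> d T\<close> because \<open>d\<close> is antitone.\<close>

lemma measure_sublevel_set_ge:
  fixes H d :: "real \<Rightarrow> real"
  assumes [measurable]: "H \<in> borel_measurable borel" "d \<in> borel_measurable borel"
    and nonneg: "\<And>t. 0 \<le> H t" and H_int: "set_integrable lborel {0..T} H"
    and "antimono d" and "0 < d T" and "0 < T"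
  shows "T * (1 - cesaro_mean H T / d T) \<le> measure lborel ({t. 0 \<le> t \<and> H t \<le> d t} \<inter> {0..T})"
proof -
  define A where "A = {t. 0 \<le> t \<and> H t \<le> d t} \<inter> {0..T}"
  define Bad where "Bad = {x\<in>{0..T}. d T \<le> H x}"
  have [measurable]: "A \<in> sets borel" "Bad \<in> sets borel"
    unfolding A_def Bad_def by measurable
  have "measure lborel Bad \<le> (LBINT t:{0..T}. H t) / d T"
    unfolding Bad_def using \<open>0 < d T\<close>
    by (intro integral_Markov_inequality'_measure) (auto simp: H_int nonneg)
  also have "\<dots> = T * (cesaro_mean H T / d T)"
    using \<open>0 < T\<close> by (simp add: cesaro_mean_def)
  finally have Bad_le: "measure lborel Bad \<le> T * (cesaro_mean H T / d T)" .
  have cover: "{0..T} \<subseteq> A \<union> Bad"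
  proof
    fix x assume x: "x \<in> {0..T}"
    show "x \<in> A \<union> Bad"
    proof (cases "H x \<le> d x")
      case True
      then show ?thesis
        using x by (simp add: A_def)
    next
      case False
      then have "d T \<le> H x"
        using antimonoD[OF \<open>antimono d\<close>, of x T] x by simp
      then show ?thesis
        using x by (simp add: Bad_def)
    qed
  qed
  have "A \<union> Bad \<in> fmeasurable lborel"
    by (rule fmeasurableI2[where A = "{0..T}"]) (auto simp: fmeasurable_def emeasure_lborel_Icc_eq A_def Bad_def)
  then have "measure lborel {0..T} \<le> measure lborel (A \<union> Bad)"
    by (intro measure_mono_fmeasurable[OF cover]) simp_all
  also have "\<dots> \<le> measure lborel A + measure lborel Bad"
    by (intro measure_Un_le) auto
  finally show ?thesis
    using \<open>0 < T\<close> Bad_le by (simp add: A_def algebra_simps)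
qed

lemma density_one_set_if_cesaro_mean_tendsto_0:
  fixes H :: "real \<Rightarrow> real"
  assumes H [measurable]: "H \<in> borel_measurable borel"
    and nonneg: "\<And>t. 0 \<le> H t" and bounded: "\<And>t. H t \<le> B"
    and cesaro: "(cesaro_mean H \<longlongrightarrow> 0) at_top"
  shows "\<exists>A. A \<subseteq> {0..} \<and> A \<in> sets borel \<and>
    ((\<lambda>T. measure lborel (A \<inter> {0..T}) / T) \<longlongrightarrow> 1) at_top \<and> (H \<longlongrightarrow> 0) (inf at_top (principal A))"
proof -
  have "bdd_above (range (cesaro_mean H))"
    using cesaro_mean_le[OF H nonneg bounded] by (auto intro!: bdd_aboveI)
  then obtain d where d: "antimono d" "\<And>t. 0 < d t" "(d \<longlongrightarrow> 0) at_top"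
    and ratio_lim: "((\<lambda>t. cesaro_mean H t / d t) \<longlongrightarrow> 0) at_top"
    using exists_antimono_tendsto_0_slower[OF cesaro_mean_nonneg[OF nonneg] _ cesaro] by blast
  have [measurable]: "d \<in> borel_measurable borel"
    using d(1) by (rule borel_measurable_antimono)
  define A where "A = {t. 0 \<le> t \<and> H t \<le> d t}"
  have "A \<in> sets borel"
    unfolding A_def by measurable
  moreover have "(H \<longlongrightarrow> 0) (inf at_top (principal A))"
    by (rule tendsto_sandwich[OF _ _ tendsto_const tendsto_mono[OF inf_le1 d(3)]])
      (auto simp: eventually_inf_principal A_def nonneg)
  moreover have "((\<lambda>T. measure lborel (A \<inter> {0..T}) / T) \<longlongrightarrow> 1) at_top"
  proof (rule tendsto_sandwich)
    show "((\<lambda>T. 1 - cesaro_mean H T / d T) \<longlongrightarrow> 1) at_top"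
      using tendsto_diff[OF tendsto_const ratio_lim, of 1] by simp
    show "\<forall>\<^sub>F T in at_top. 1 - cesaro_mean H T / d T \<le> measure lborel (A \<inter> {0..T}) / T"
      using eventually_gt_at_top[of 0]
    proof eventually_elim
      case (elim T)
      have "set_integrable lborel {0..T} H"
        by (rule set_integrable_Icc_bounded[where B = B]) (auto simp: nonneg bounded abs_of_nonneg)
      then show ?case
        using measure_sublevel_set_ge[OF H _ nonneg _ d(1) d(2) elim] elim
        by (simp add: A_def pos_le_divide_eq mult.commute)
    qed
    show "\<forall>\<^sub>F T in at_top. measure lborel (A \<inter> {0..T}) / T \<le> 1"
      using eventually_gt_at_top[of 0]
    proof eventually_elim
      case (elim T)
      have "measure lborel (A \<inter> {0..T}) \<le> measure lborel {0..T}"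
        using \<open>A \<in> sets borel\<close>
        by (intro measure_mono_fmeasurable) (auto simp: fmeasurable_def emeasure_lborel_Icc_eq)
      then show ?case
        using elim by simp
    qed
  qed simp
  ultimately show ?thesis
    by (intro exI[of _ A]) (auto simp: A_def)
qed

lemma summable_half_power_mult:
  fixes h :: "nat \<Rightarrow> real"
  assumes "\<And>n. 0 \<le> h n" and "\<And>n. h n \<le> B"
  shows "summable (\<lambda>n. (1/2)^n * h n)"
  by (rule summable_comparison_test[OF _ summable_mult[OF summable_geometric, of "1/2" B]])
    (auto simp: assms mult.commute mult_left_mono)

lemma suminf_half_power_mult_le:
  fixes h :: "nat \<Rightarrow> real"
  assumes nonneg: "\<And>n. 0 \<le> h n" and bounded: "\<And>n. h n \<le> B"
  shows "(\<Sum>n. (1/2)^n * h n) \<le> (\<Sum>n<N. (1/2)^n * h n) + 2 * B * (1/2)^N"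
proof -
  note summable = summable_half_power_mult[OF nonneg bounded]
  have "(\<Sum>n. (1/2)^(n + N) * h (n + N)) \<le> (\<Sum>n. (1/2)^N * B * (1/2)^n)"
    by (intro suminf_le summable_ignore_initial_segment summable summable_mult summable_geometric)
      (auto simp: power_add mult_left_mono bounded mult_ac)
  also have "\<dots> = 2 * B * (1/2)^N"
    by (simp add: suminf_mult suminf_geometric)
  finally show ?thesis
    unfolding suminf_split_initial_segment[OF summable, where k = N] by simp
qed

text \<open>Cut the series where its tail is below \<open>\<epsilon>/2\<close>; the finitely many leading Cesaro means tend to \<open>0\<close>.\<close>

lemma cesaro_mean_suminf_tendsto_0:
  fixes h :: "nat \<Rightarrow> real \<Rightarrow> real"
  assumes h [measurable]: "\<And>n. h n \<in> borel_measurable borel"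
    and nonneg: "\<And>n t. 0 \<le> h n t" and bounded: "\<And>n t. h n t \<le> B"
    and cesaro: "\<And>n. (cesaro_mean (h n) \<longlongrightarrow> 0) at_top"
  shows "(cesaro_mean (\<lambda>t. \<Sum>n. (1/2)^n * h n t) \<longlongrightarrow> 0) at_top"
proof -
  define H where "H t = (\<Sum>n. (1/2)^n * h n t)" for t
  have H_le: "H t \<le> (\<Sum>n<N. (1/2)^n * h n t) + 2 * B * (1/2)^N" for t N
    unfolding H_def by (rule suminf_half_power_mult_le) (simp_all add: nonneg bounded)
  have H_nonneg: "0 \<le> H t" for t
    unfolding H_def by (intro suminf_nonneg summable_half_power_mult[where B = B]) (simp_all add: nonneg bounded)
  have B_nonneg: "0 \<le> B"
    using nonneg[of 0 0] bounded[of 0 0] by linarith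
  have int_bounded: "set_integrable lborel {0..T} f"
    if "f \<in> borel_measurable borel" "\<And>t. 0 \<le> f t" "\<And>t. f t \<le> C" for f :: "real \<Rightarrow> real" and C T
    using that by (intro set_integrable_Icc_bounded[where B = C]) (auto simp: abs_of_nonneg)
  have H_int: "set_integrable lborel {0..T} H" for T
  proof (rule int_bounded[where C = "2 * B"])
    show "H \<in> borel_measurable borel"
      unfolding H_def by measurable
    show "H t \<le> 2 * B" for t
      using H_le[of t 0] by simp
  qed (rule H_nonneg)
  have "(cesaro_mean H \<longlongrightarrow> 0) at_top"
  proof (rule order_tendstoI)
    show "\<forall>\<^sub>F T in at_top. e < cesaro_mean H T" if "e < 0" for e
      using that cesaro_mean_nonneg[of H, OF H_nonneg]
      by (intro always_eventually allI) (auto intro: less_le_trans)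
  next
    fix e :: real assume "0 < e"
    obtain N where "(1/2::real)^N < e / (4 * B + 1)"
      using B_nonneg \<open>0 < e\<close> real_arch_pow_inv[of "e / (4 * B + 1)" "1/2::real"] by auto
    then have "2 * B * (1/2)^N \<le> 2 * B * (e / (4 * B + 1))"
      using B_nonneg by (intro mult_left_mono) auto
    also have "\<dots> < e / 2"
      using B_nonneg \<open>0 < e\<close> by (simp add: field_simps)
    finally have N: "2 * B * (1/2)^N < e / 2" .
    have "((\<lambda>T. \<Sum>n<N. (1/2)^n * cesaro_mean (h n) T) \<longlongrightarrow> (\<Sum>n<N. (1/2)^n * 0)) at_top"
      by (intro tendsto_sum tendsto_mult tendsto_const cesaro)
    then have "\<forall>\<^sub>F T in at_top. (\<Sum>n<N. (1/2)^n * cesaro_mean (h n) T) < e / 2"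
      using \<open>0 < e\<close> by (intro order_tendstoD(2)) auto
    then show "\<forall>\<^sub>F T in at_top. cesaro_mean H T < e"
      using eventually_gt_at_top[of 0]
    proof eventually_elim
      case (elim T)
      have head_int: "set_integrable lborel {0..T} (\<lambda>t. \<Sum>n<N. (1/2)^n * h n t)"
        by (rule int_bounded[where C = "\<Sum>n<N. (1/2)^n * B"])
          (auto intro!: sum_nonneg sum_mono mult_left_mono simp: nonneg bounded)
      have const_int: "set_integrable lborel {0..T} (\<lambda>t. 2 * B * (1/2)^N)"
        by (rule int_bounded) (auto simp: B_nonneg)
      have "(LBINT t:{0..T}. H t) \<le> (LBINT t:{0..T}. (\<Sum>n<N. (1/2)^n * h n t) + 2 * B * (1/2)^N)"
        by (rule set_integral_mono[OF H_int set_integral_add(1)[OF head_int const_int] H_le])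
      also have "\<dots> = (\<Sum>n<N. (1/2)^n * (LBINT t:{0..T}. h n t)) + 2 * B * (1/2)^N * T"
        using elim head_int const_int
        by (simp add: set_integral_add(2) set_integral_sum int_bounded[OF h nonneg bounded])
          (simp add: set_lebesgue_integral_def mult.commute)
      finally have "cesaro_mean H T \<le> ((\<Sum>n<N. (1/2)^n * (LBINT t:{0..T}. h n t)) + 2 * B * (1/2)^N * T) / T"
        unfolding cesaro_mean_def using elim by (intro divide_right_mono) auto
      also have "\<dots> = (\<Sum>n<N. (1/2)^n * cesaro_mean (h n) T) + 2 * B * (1/2)^N"
        using elim by (simp add: cesaro_mean_def add_divide_distrib sum_divide_distrib)
      finally show ?case
        using elim N by linarith
    qed
  qed
  then show ?thesis
    by (simp add: H_def[abs_def])
qed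

lemma common_density_one_set_if_cesaro_mean_tendsto_0:
  fixes h :: "nat \<Rightarrow> real \<Rightarrow> real"
  assumes h [measurable]: "\<And>n. h n \<in> borel_measurable borel"
    and nonneg: "\<And>n t. 0 \<le> h n t" and bounded: "\<And>n t. h n t \<le> B"
    and cesaro: "\<And>n. (cesaro_mean (h n) \<longlongrightarrow> 0) at_top"
  shows "\<exists>A. A \<subseteq> {0..} \<and> A \<in> sets borel \<and>
    ((\<lambda>T. measure lborel (A \<inter> {0..T}) / T) \<longlongrightarrow> 1) at_top \<and>
    (\<forall>n. (h n \<longlongrightarrow> 0) (inf at_top (principal A)))"
proof -
  define H where "H t = (\<Sum>n. (1/2)^n * h n t)" for t
  have summable: "summable (\<lambda>n. (1/2)^n * h n t)" for t
    by (rule summable_half_power_mult[where B = B]) (simp_all add: nonneg bounded)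
  have H_nonneg: "0 \<le> H t" for t
    unfolding H_def by (intro suminf_nonneg summable) (simp add: nonneg)
  have H_le: "H t \<le> 2 * B" for t
    using suminf_half_power_mult_le[of "\<lambda>n. h n t" B 0] by (simp add: H_def nonneg bounded)
  have h_le_H: "h n t \<le> 2^n * H t" for n t
  proof -
    have "(1/2)^n * h n t \<le> H t"
      unfolding H_def using sum_le_suminf[OF summable, of "{n}"] by (simp add: nonneg)
    then show ?thesis
      by (simp add: field_simps)
  qed
  obtain A where A: "A \<subseteq> {0..}" "A \<in> sets borel"
    "((\<lambda>T. measure lborel (A \<inter> {0..T}) / T) \<longlongrightarrow> 1) at_top"
    and H_lim: "(H \<longlongrightarrow> 0) (inf at_top (principal A))"
  proof (rule density_one_set_if_cesaro_mean_tendsto_0[OF _ H_nonneg H_le, THEN exE])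
    show "H \<in> borel_measurable borel"
      unfolding H_def by measurable
    show "(cesaro_mean H \<longlongrightarrow> 0) at_top"
      unfolding H_def[abs_def] by (rule cesaro_mean_suminf_tendsto_0[OF h nonneg bounded cesaro])
  qed blast
  have "(h n \<longlongrightarrow> 0) (inf at_top (principal A))" for n
    using tendsto_mult_right_zero[OF H_lim, of "2^n"]
    by (rule tendsto_sandwich[rotated 2, OF tendsto_const]) (auto simp: nonneg h_le_H)
  with A show ?thesis
    by blast
qed

text \<open>Real trigonometric polynomials on \<open>\<real>/\<int>\<close>; the phase \<open>\<theta>\<close> makes sines unnecessary and keeps the
  class closed under products with a single generator.\<close>

inductive trig_poly :: "(real \<Rightarrow> real) \<Rightarrow> bool" where
  cos: "trig_poly (\<lambda>u. cos (2 * pi * of_int k * u + \<theta>))"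
| add: "trig_poly f \<Longrightarrow> trig_poly g \<Longrightarrow> trig_poly (\<lambda>u. f u + g u)"
| scale: "trig_poly f \<Longrightarrow> trig_poly (\<lambda>u. c * f u)"

lemma trig_poly_cong:
  assumes "trig_poly f" and "\<And>u. f u = g u"
  shows "trig_poly g"
proof -
  have "f = g"
    using assms(2) by auto
  then show ?thesis
    using assms(1) by simp
qed

lemma trig_poly_const: "trig_poly (\<lambda>u. c)"
  by (rule trig_poly_cong[OF trig_poly.scale[OF trig_poly.cos[of 0 0]], of c]) simp

lemma trig_poly_cos_mult:
  assumes "trig_poly g"
  shows "trig_poly (\<lambda>u. cos (2 * pi * of_int k * u + \<theta>) * g u)"
  using assms
proof induction
  case (cos m \<phi>)
  have "trig_poly (\<lambda>u. 1/2 * cos (2 * pi * of_int (k - m) * u + (\<theta> - \<phi>))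
      + 1/2 * cos (2 * pi * of_int (k + m) * u + (\<theta> + \<phi>)))"
    by (intro trig_poly.intros)
  then show ?case
  proof (rule trig_poly_cong)
    fix u
    have "2 * pi * of_int (k - m) * u + (\<theta> - \<phi>) = (2 * pi * of_int k * u + \<theta>) - (2 * pi * of_int m * u + \<phi>)"
      "2 * pi * of_int (k + m) * u + (\<theta> + \<phi>) = (2 * pi * of_int k * u + \<theta>) + (2 * pi * of_int m * u + \<phi>)"
      by (simp_all add: algebra_simps)
    then show "1/2 * cos (2 * pi * of_int (k - m) * u + (\<theta> - \<phi>)) + 1/2 * cos (2 * pi * of_int (k + m) * u + (\<theta> + \<phi>))
        = cos (2 * pi * of_int k * u + \<theta>) * cos (2 * pi * of_int m * u + \<phi>)"
      by (simp only: cos_times_cos) simp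
  qed
next
  case (add f g)
  from add.IH show ?case
    by (rule trig_poly_cong[OF trig_poly.add]) (simp add: algebra_simps)
next
  case (scale f c)
  from scale.IH show ?case
    by (rule trig_poly_cong[OF trig_poly.scale[where c = c]]) (simp add: algebra_simps)
qed

lemma trig_poly_mult:
  assumes "trig_poly f" "trig_poly g"
  shows "trig_poly (\<lambda>u. f u * g u)"
  using assms
proof induction
  case (cos k \<theta>)
  then show ?case
    by (rule trig_poly_cos_mult)
next
  case (add f1 f2)
  from add.IH[OF add.prems] show ?case
    by (rule trig_poly_cong[OF trig_poly.add]) (simp add: algebra_simps)
next
  case (scale f c)
  from scale.IH[OF scale.prems] show ?case
    by (rule trig_poly_cong[OF trig_poly.scale[where c = c]]) (simp add: algebra_simps)
qed

lemma trig_poly_polynomial_cis: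
  assumes "real_polynomial_function P"
  shows "trig_poly (\<lambda>u. P (cis (2 * pi * u)))"
  using assms
proof induction
  case (linear l)
  interpret l: bounded_linear l by fact
  have "l (cis x) = l 1 * cos (x + 0) + l \<i> * cos (x - pi / 2)" for x
  proof -
    have "cis x = cos x *\<^sub>R 1 + sin x *\<^sub>R \<i>"
      by (simp add: complex_eq_iff)
    then show ?thesis
      by (simp add: l.add l.scaleR cos_diff)
  qed
  moreover have "trig_poly (\<lambda>u. l 1 * cos (2 * pi * of_int 1 * u + 0) + l \<i> * cos (2 * pi * of_int 1 * u + - (pi / 2)))"
    by (intro trig_poly.intros)
  ultimately show ?case
    by (simp add: trig_poly_cong)
next
  case (const c)
  show ?case
    by (rule trig_poly_const)
next
  case (add f g)
  from add.IH show ?case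
    by (rule trig_poly.add)
next
  case (mult f g)
  from mult.IH show ?case
    by (rule trig_poly_mult)
qed

lemma circle_funI:
  assumes "continuous_on UNIV f" and "\<And>x. f (x + 1) = f x"
  shows "circle_fun f"
  using assms by (simp add: circle_fun_def)

lemma trig_poly_circle_fun: "trig_poly f \<Longrightarrow> circle_fun f"
proof (induction rule: trig_poly.induct)
  case (cos k \<theta>)
  have "cos (2 * pi * of_int k * (x + 1) + \<theta>) = cos ((2 * pi * of_int k * x + \<theta>) + 2 * pi * of_int k)" for x
    by (simp add: algebra_simps)
  then show ?case
    by (intro circle_funI continuous_intros) (simp add: cos_add)
next
  case (add f g)
  then show ?case
    by (auto simp: circle_fun_def intro!: continuous_intros)
next
  case (scale f c)
  then show ?case
    by (auto simp: circle_fun_def intro!: continuous_intros)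
qed

lemma circle_fun_plus_of_int:
  assumes "circle_fun f"
  shows "f (u + of_int k) = f u"
proof -
  interpret periodic_fun_simple' f
    using assms by unfold_locales (simp add: circle_fun_def)
  show ?thesis
    by (rule plus_of_int)
qed

lemma circle_fun_bounded:
  assumes f: "circle_fun f"
  obtains B where "\<And>u. \<bar>f u\<bar> \<le> B"
proof -
  have "compact (f ` {0..1})"
    using f by (intro compact_continuous_image) (auto simp: circle_fun_def intro: continuous_on_subset)
  then have "bounded (f ` {0..1})"
    by (rule compact_imp_bounded)
  then obtain B where B: "\<forall>y\<in>f ` {0..1}. norm y \<le> B"
    by (auto simp: bounded_iff)
  have "\<bar>f u\<bar> \<le> B" for u
  proof -
    have "f u = f (frac u + of_int \<lfloor>u\<rfloor>)"
      by (simp add: frac_def)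
    also have "\<dots> = f (frac u)"
      by (rule circle_fun_plus_of_int[OF f])
    finally show ?thesis
      using B frac_ge_0[of u] frac_lt_1[of u] by auto
  qed
  then show ?thesis
    by (rule that)
qed

lemma circle_fun_measurable:
  "circle_fun f \<Longrightarrow> f \<in> borel_measurable borel"
  by (simp add: circle_fun_def borel_measurable_continuous_onI)

text \<open>Stone--Weierstrass on the unit circle, transported to \<open>\<real>/\<int>\<close> along \<open>u \<mapsto> cis (2\<pi>u)\<close>.\<close>

lemma circle_fun_approx_trig_poly:
  assumes f: "circle_fun f" and "0 < e"
  obtains g where "trig_poly g" and "\<And>u. \<bar>f u - g u\<bar> < e"
proof -
  have f_cont: "isCont f x" for x
    using f by (simp add: circle_fun_def continuous_on_eq_continuous_at)
  define F where "F z = f (Arg z / (2 * pi))" for z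
  have F_cis: "F (cis (2 * pi * u)) = f u" for u
  proof -
    have "Arg (cis (2 * pi * u)) / (2 * pi) = u + of_int (- \<lceil>u - 1 / 2\<rceil>)"
      using Arg_rcis'[of 1 "2 * pi * u"] by (simp add: cis_rcis_eq normalize_angle_def field_simps)
    then show ?thesis
      unfolding F_def by (simp only: circle_fun_plus_of_int[OF f])
  qed
  have F_cont: "continuous_on (sphere 0 1) F"
  proof (intro continuous_at_imp_continuous_on ballI)
    fix z :: complex
    assume "z \<in> sphere 0 1"
    then have "z \<noteq> 0"
      by auto
    show "isCont F z"
    proof (cases "z \<in> \<real>\<^sub>\<le>\<^sub>0")
      case False
      then have "isCont (\<lambda>z. Arg z / (2 * pi)) z"
        by (intro continuous_intros continuous_at_Arg) auto
      then show ?thesis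
        unfolding F_def by (rule isCont_o2[OF _ f_cont])
    next
      case True
      \<comment> \<open>Near the cut of \<open>Arg\<close>, \<open>F\<close> agrees with \<open>G\<close>, which is continuous there.\<close>
      define G where "G z = f (Arg (- z) / (2 * pi) + 1 / 2)" for z
      have "- z \<notin> \<real>\<^sub>\<le>\<^sub>0"
        using True \<open>z \<noteq> 0\<close> by (auto simp: nonpos_Reals_def complex_eq_iff)
      then have "isCont (\<lambda>z. Arg (- z) / (2 * pi) + 1 / 2) z"
        by (intro continuous_intros isCont_o2[where f = uminus and g = Arg, OF _ continuous_at_Arg]) auto
      then have "isCont G z"
        unfolding G_def by (rule isCont_o2[OF _ f_cont])
      have F_eq_G: "F w = G w" if "w \<noteq> 0" for w
      proof -
        have "Arg (- w) / (2 * pi) + 1 / 2 = Arg w / (2 * pi) + of_int (if Arg w \<le> 0 then 1 else 0)"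
          using Arg_minus[OF that] by (auto simp: field_simps)
        then show ?thesis
          unfolding F_def G_def by (simp only: circle_fun_plus_of_int[OF f])
      qed
      have "\<forall>\<^sub>F w in nhds z. w \<noteq> 0"
        using \<open>z \<noteq> 0\<close> by (rule t1_space_nhds)
      then have "\<forall>\<^sub>F w in nhds z. F w = G w"
        by eventually_elim (rule F_eq_G)
      then show ?thesis
        using \<open>isCont G z\<close> isCont_cong by blast
    qed
  qed
  obtain P where P: "polynomial_function P" "\<And>z. z \<in> sphere 0 1 \<Longrightarrow> norm (F z - P z) < e"
    using Stone_Weierstrass_polynomial_function[OF compact_sphere F_cont \<open>0 < e\<close>] by blast
  show ?thesis
  proof (rule that)
    show "trig_poly (\<lambda>u. P (cis (2 * pi * u)))"
      using P(1) by (intro trig_poly_polynomial_cis) (simp add: real_polynomial_function_eq)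
    show "\<bar>f u - P (cis (2 * pi * u))\<bar> < e" for u
      using P(2)[of "cis (2 * pi * u)"] F_cis[of u] by simp
  qed
qed

lemma circle_fun_set_integrable: "circle_fun f \<Longrightarrow> set_integrable lborel {0..1} f"
  unfolding circle_fun_def by (metis borel_integrable_atLeastAtMost' continuous_on_subset subset_UNIV)

lemma haar_int_add:
  "circle_fun f \<Longrightarrow> circle_fun g \<Longrightarrow> haar_int (\<lambda>u. f u + g u) = haar_int f + haar_int g"
  unfolding haar_int_def by (intro set_integral_add circle_fun_set_integrable)

lemma haar_int_scale: "haar_int (\<lambda>u. c * f u) = c * haar_int f"
  by (simp add: haar_int_def)

lemma haar_int_cos:
  "haar_int (\<lambda>u. cos (2 * pi * of_int k * u + \<theta>)) = (if k = 0 then cos \<theta> else 0)"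
proof (cases "k = 0")
  case False
  let ?a = "2 * pi * of_int k"
  have "(LBINT u=ereal 0..ereal 1. cos (?a * u + \<theta>)) = sin (?a * 1 + \<theta>) / ?a - sin (?a * 0 + \<theta>) / ?a"
    using False
    by (intro interval_integral_FTC_finite continuous_intros)
      (auto intro!: derivative_eq_intros simp: has_real_derivative_iff_has_vector_derivative[symmetric])
  also have "sin (?a * 1 + \<theta>) = sin \<theta>"
    by (simp add: sin_add)
  finally show ?thesis
    using False by (simp add: haar_int_def interval_integral_Icc)
qed (simp add: haar_int_def set_lebesgue_integral_def)

lemma abs_haar_int_diff_le:
  assumes f: "circle_fun f" and g: "circle_fun g" and le: "\<And>u. \<bar>f u - g u\<bar> \<le> e"
  shows "\<bar>haar_int f - haar_int g\<bar> \<le> e"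
proof -
  have int: "set_integrable lborel {0..1} (\<lambda>u. f u - g u)"
    using f g by (intro set_integral_diff circle_fun_set_integrable)
  have "\<bar>haar_int f - haar_int g\<bar> = \<bar>LBINT u:{0..1}. f u - g u\<bar>"
    using f g by (simp add: haar_int_def set_integral_diff circle_fun_set_integrable)
  also have "\<dots> \<le> (LBINT u:{0..1}. \<bar>f u - g u\<bar>)"
    using set_integral_norm_bound[OF int] by simp
  also have "\<dots> \<le> (LBINT u:{0..1::real}. e)"
  proof (rule set_integral_mono)
    show "set_integrable lborel {0..1} (\<lambda>u. \<bar>f u - g u\<bar>)"
      using int by (rule set_integrable_abs)
    show "set_integrable lborel {0..1::real} (\<lambda>u. e)"
      by (rule set_integrable_Icc_bounded[where B = "\<bar>e\<bar>"]) auto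
  qed (rule le)
  also have "\<dots> = e"
    by (simp add: set_lebesgue_integral_def)
  finally show ?thesis .
qed

lemma mu_int_scale: "mu_int M x0 t (\<lambda>u. c * f u) = c * mu_int M x0 t f"
  by (simp add: mu_int_def)

context real_distribution
begin

lemma integrable_circle_fun:
  assumes "circle_fun f"
  shows "integrable M (\<lambda>y. f (t * y + x0))"
proof -
  obtain B where "\<And>u. \<bar>f u\<bar> \<le> B"
    using circle_fun_bounded[OF assms] by blast
  moreover have [measurable]: "f \<in> borel_measurable borel"
    using assms by (rule circle_fun_measurable)
  ultimately show ?thesis
    by (intro integrable_const_bound[where B = B]) auto
qed

lemma mu_int_add:
  "circle_fun f \<Longrightarrow> circle_fun g \<Longrightarrow> mu_int M x0 t (\<lambda>u. f u + g u) = mu_int M x0 t f + mu_int M x0 t g"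
  unfolding mu_int_def by (intro Bochner_Integration.integral_add integrable_circle_fun)

lemma mu_int_cos:
  "mu_int M x0 t (\<lambda>u. cos (b * u + \<theta>)) =
    cos (b * x0 + \<theta>) * (\<integral>y. cos (b * t * y) \<partial>M) - sin (b * x0 + \<theta>) * (\<integral>y. sin (b * t * y) \<partial>M)"
proof -
  have "cos (b * (t * y + x0) + \<theta>) = cos (b * x0 + \<theta>) * cos (b * t * y) - sin (b * x0 + \<theta>) * sin (b * t * y)" for y
    by (simp add: cos_add[symmetric] algebra_simps)
  then show ?thesis
    by (simp add: mu_int_def)
qed

lemma abs_mu_int_diff_le:
  assumes f: "circle_fun f" and g: "circle_fun g" and le: "\<And>u. \<bar>f u - g u\<bar> \<le> e"
  shows "\<bar>mu_int M x0 t f - mu_int M x0 t g\<bar> \<le> e"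
proof -
  have "\<bar>mu_int M x0 t f - mu_int M x0 t g\<bar> = \<bar>\<integral>y. f (t * y + x0) - g (t * y + x0) \<partial>M\<bar>"
    unfolding mu_int_def using f g by (simp add: integrable_circle_fun)
  also have "\<dots> \<le> (\<integral>y. \<bar>f (t * y + x0) - g (t * y + x0)\<bar> \<partial>M)"
    using integral_norm_bound[of M "\<lambda>y. f (t * y + x0) - g (t * y + x0)"] by simp
  also have "\<dots> \<le> e"
    using f g le by (intro integral_le_const) (auto simp: integrable_circle_fun)
  finally show ?thesis .
qed

lemma mu_int_tendsto_haar_int_trig_poly:
  assumes fourier: "\<And>k. k \<noteq> 0 \<Longrightarrow> ((\<lambda>t. fourier_sq M (2 * pi * of_int k * t)) \<longlongrightarrow> 0) F"
    and "trig_poly g"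
  shows "((\<lambda>t. mu_int M x0 t g) \<longlongrightarrow> haar_int g) F"
  using \<open>trig_poly g\<close>
proof induction
  case (cos k \<theta>)
  show ?case
  proof (cases "k = 0")
    case True
    then show ?thesis
      by (simp add: mu_int_def haar_int_def set_lebesgue_integral_def prob_space[unfolded space_eq_univ])
  next
    case False
    let ?b = "2 * pi * of_int k"
    have sqrt_lim: "((\<lambda>t. sqrt (fourier_sq M (?b * t))) \<longlongrightarrow> 0) F"
      using tendsto_real_sqrt[OF fourier[OF False]] by simp
    have "((\<lambda>t. \<integral>y. cos (?b * t * y) \<partial>M) \<longlongrightarrow> 0) F"
      by (rule tendsto_0_le[OF sqrt_lim, where K = 1], intro always_eventually allI)
        (unfold real_norm_def mult_1_right, rule order_trans[OF abs_integral_cos_sin_le_sqrt_fourier_sq(1) abs_ge_self])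
    moreover have "((\<lambda>t. \<integral>y. sin (?b * t * y) \<partial>M) \<longlongrightarrow> 0) F"
      by (rule tendsto_0_le[OF sqrt_lim, where K = 1], intro always_eventually allI)
        (unfold real_norm_def mult_1_right, rule order_trans[OF abs_integral_cos_sin_le_sqrt_fourier_sq(2) abs_ge_self])
    ultimately have "((\<lambda>t. mu_int M x0 t (\<lambda>u. cos (?b * u + \<theta>))) \<longlongrightarrow> cos (?b * x0 + \<theta>) * 0 - sin (?b * x0 + \<theta>) * 0) F"
      unfolding mu_int_cos by (intro tendsto_intros)
    then show ?thesis
      using False by (simp add: haar_int_cos)
  qed
next
  case (add f g)
  then show ?case
    by (simp add: mu_int_add haar_int_add trig_poly_circle_fun tendsto_add)
next
  case (scale f c)
  then show ?case
    by (simp add: mu_int_scale haar_int_scale tendsto_mult_left)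
qed

lemma mu_int_tendsto_haar_int:
  assumes fourier: "\<And>k. k \<noteq> 0 \<Longrightarrow> ((\<lambda>t. fourier_sq M (2 * pi * of_int k * t)) \<longlongrightarrow> 0) F"
    and f: "circle_fun f"
  shows "((\<lambda>t. mu_int M x0 t f) \<longlongrightarrow> haar_int f) F"
proof (rule tendstoI)
  fix e :: real
  assume "0 < e"
  then obtain g where g: "trig_poly g" and fg: "\<And>u. \<bar>f u - g u\<bar> < e / 3"
    using circle_fun_approx_trig_poly[OF f, of "e / 3"] by auto
  have "\<forall>\<^sub>F t in F. dist (mu_int M x0 t g) (haar_int g) < e / 3"
    using tendstoD[OF mu_int_tendsto_haar_int_trig_poly[OF fourier g], of "e / 3"] \<open>0 < e\<close>
    by simp
  then show "\<forall>\<^sub>F t in F. dist (mu_int M x0 t f) (haar_int f) < e"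
  proof eventually_elim
    case (elim t)
    have "\<bar>f u - g u\<bar> \<le> e / 3" for u
      using fg[of u] by simp
    then have "\<bar>mu_int M x0 t f - mu_int M x0 t g\<bar> \<le> e / 3" "\<bar>haar_int f - haar_int g\<bar> \<le> e / 3"
      using f trig_poly_circle_fun[OF g] by (blast intro: abs_mu_int_diff_le abs_haar_int_diff_le)+
    then show ?case
      using elim unfolding dist_real_def by linarith
  qed
qed

lemma weakly_equidistributed_if_atomless:
  assumes atomless: "\<And>y. measure M {y} = 0"
  shows "weakly_equidistributed M x0"
proof -
  define h where "h n t = fourier_sq M (2 * pi * real (Suc n) * t)" for n t
  obtain A where A: "A \<subseteq> {0..}" "A \<in> sets borel"
      "((\<lambda>T. measure lborel (A \<inter> {0..T}) / T) \<longlongrightarrow> 1) at_top"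
    and h_lim: "\<And>n. (h n \<longlongrightarrow> 0) (inf at_top (principal A))"
  proof (rule common_density_one_set_if_cesaro_mean_tendsto_0[of h 2, THEN exE])
    show "h n \<in> borel_measurable borel" for n
      unfolding h_def by measurable
    show "0 \<le> h n t" for n t
      by (simp add: h_def fourier_sq_def)
    show "h n t \<le> 2" for n t
      unfolding h_def by (rule fourier_sq_le_2)
    show "(cesaro_mean (h n) \<longlongrightarrow> 0) at_top" for n
      unfolding h_def by (rule cesaro_mean_fourier_sq_tendsto_0[OF atomless]) simp
  qed blast
  have "((\<lambda>t. fourier_sq M (2 * pi * of_int k * t)) \<longlongrightarrow> 0) (inf at_top (principal A))" if "k \<noteq> 0" for k
  proof -
    have "fourier_sq M (2 * pi * of_int k * t) = h (nat \<bar>k\<bar> - 1) t" for t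
      using that fourier_sq_minus[of M "2 * pi * of_int \<bar>k\<bar> * t"]
      by (cases "k > 0") (simp_all add: h_def of_nat_diff)
    then show ?thesis
      using h_lim by presburger
  qed
  then have "((\<lambda>t. mu_int M x0 t f) \<longlongrightarrow> haar_int f) (inf at_top (principal A))" if "circle_fun f" for f
    using that by (rule mu_int_tendsto_haar_int)
  moreover have "measure lebesgue (A \<inter> {0..T}) = measure lborel (A \<inter> {0..T})" for T
    using A(2) by (intro measure_completion) auto
  ultimately show ?thesis
    unfolding weakly_equidistributed_def using A
    by (intro exI[of _ A]) (auto simp: sets_completionI_sets)
qed

end

text \<open>Multiplying \<open>lacunary_map x\<close> by \<open>2^((j+3)^2)\<close> turns the terms with \<open>k \<le> j\<close> into integers
  and leaves a tail of at most \<open>1/16\<close>; see \<open>lacunary_map_near_int\<close>.\<close>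

definition clamp01 :: "real \<Rightarrow> real" where
  "clamp01 x = max 0 (min 1 x)"

definition lacunary_term :: "real \<Rightarrow> nat \<Rightarrow> real" where
  "lacunary_term x k = of_int \<lfloor>2 ^ k * clamp01 x\<rfloor> / 2 ^ (k + 3)\<^sup>2"

definition lacunary_map :: "real \<Rightarrow> real" where
  "lacunary_map x = (\<Sum>k. lacunary_term x k)"

definition lacunary_measure :: "real measure" where
  "lacunary_measure = distr (uniform_measure lborel {0..1}) borel lacunary_map"

lemma lacunary_term_nonneg: "0 \<le> lacunary_term x k"
  by (simp add: lacunary_term_def clamp01_def)

lemma lacunary_term_le: "lacunary_term x k \<le> 2 ^ k / 2 ^ (k + 3)\<^sup>2"
proof -
  have "2 ^ k * clamp01 x \<le> 2 ^ k"
    by (simp add: clamp01_def)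
  then have "of_int \<lfloor>2 ^ k * clamp01 x\<rfloor> \<le> (2 ^ k :: real)"
    by linarith
  then show ?thesis
    unfolding lacunary_term_def by (simp add: divide_right_mono)
qed

lemma lacunary_term_le_geometric: "lacunary_term x k \<le> (1/2) ^ k"
proof -
  have "(2::real) ^ k / 2 ^ (k + 3)\<^sup>2 \<le> 2 ^ k / 2 ^ (2 * k)"
    by (intro divide_left_mono power_increasing) (auto simp: power2_eq_square algebra_simps)
  also have "\<dots> = (1/2) ^ k"
    by (simp add: power_mult power_divide field_simps power2_eq_square[symmetric] power_mult_distrib[symmetric])
  finally show ?thesis
    using lacunary_term_le[of x k] by linarith
qed

lemma summable_lacunary_term: "summable (lacunary_term x)"
  by (rule summable_comparison_test[OF _ summable_geometric[of "1/2::real"]])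
    (auto simp: lacunary_term_nonneg lacunary_term_le_geometric)

lemma clamp01_mono: "x \<le> y \<Longrightarrow> clamp01 x \<le> clamp01 y"
  by (auto simp: clamp01_def)

lemma lacunary_term_mono: "x \<le> y \<Longrightarrow> lacunary_term x k \<le> lacunary_term y k"
  unfolding lacunary_term_def by (auto intro!: divide_right_mono floor_mono mult_left_mono clamp01_mono)

lemma mono_lacunary_map: "mono lacunary_map"
  unfolding lacunary_map_def mono_def
  by (intro allI impI suminf_le summable_lacunary_term lacunary_term_mono)

lemma lacunary_map_strict_mono:
  assumes "0 \<le> x" "x < y" "y \<le> 1"
  shows "lacunary_map x < lacunary_map y"
proof -
  obtain k where "1 / (y - x) < 2 ^ k"
    using real_arch_pow[of 2 "1 / (y - x)"] by auto
  then have "2 ^ k * x + 1 \<le> 2 ^ k * y"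
    using assms by (simp add: field_simps)
  then have "\<lfloor>2 ^ k * x\<rfloor> < \<lfloor>2 ^ k * y\<rfloor>"
    by linarith
  then have "lacunary_term x k < lacunary_term y k"
    using assms by (simp add: lacunary_term_def clamp01_def divide_strict_right_mono)
  then have "0 < (\<Sum>i. lacunary_term y i - lacunary_term x i)"
    using assms
    by (intro suminf_pos2[where i = k] summable_diff summable_lacunary_term)
      (auto simp: lacunary_term_mono)
  also have "\<dots> = lacunary_map y - lacunary_map x"
    unfolding lacunary_map_def by (rule suminf_diff[symmetric]) (rule summable_lacunary_term)+
  finally show ?thesis
    by simp
qed

lemma lacunary_map_near_int:
  obtains I :: int and r where "2 ^ (j + 3)\<^sup>2 * lacunary_map x = of_int I + r" and "0 \<le> r" and "r \<le> 1/16"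
proof -
  define c :: real where "c = 2 ^ (j + 3)\<^sup>2"
  define g where "g k = c * lacunary_term x k" for k
  have g_summable: "summable g"
    unfolding g_def by (intro summable_mult summable_lacunary_term)
  have "c * lacunary_map x = (\<Sum>k. g k)"
    unfolding lacunary_map_def g_def by (intro suminf_mult[symmetric] summable_lacunary_term)
  also have "\<dots> = (\<Sum>i. g (i + Suc j)) + sum g {..<Suc j}"
    by (rule suminf_split_initial_segment[OF g_summable])
  finally have split: "c * lacunary_map x = (\<Sum>i. g (i + Suc j)) + sum g {..<Suc j}" .
  define I where "I = (\<Sum>k<Suc j. \<lfloor>2 ^ k * clamp01 x\<rfloor> * 2 ^ ((j + 3)\<^sup>2 - (k + 3)\<^sup>2))"
  have "g k = of_int (\<lfloor>2 ^ k * clamp01 x\<rfloor> * 2 ^ ((j + 3)\<^sup>2 - (k + 3)\<^sup>2))" if "k < Suc j" for k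
  proof -
    have "(k + 3)\<^sup>2 \<le> (j + 3)\<^sup>2"
      using that by (intro power_mono) auto
    then have "c = 2 ^ ((j + 3)\<^sup>2 - (k + 3)\<^sup>2) * 2 ^ (k + 3)\<^sup>2"
      unfolding c_def by (simp flip: power_add)
    then show ?thesis
      unfolding g_def lacunary_term_def by simp
  qed
  then have head: "sum g {..<Suc j} = of_int I"
    unfolding I_def by simp
  have tail_term: "g (i + Suc j) \<le> (1/2) ^ (i + 5)" for i
  proof -
    let ?k = "i + Suc j"
    have "g ?k \<le> c * (2 ^ ?k / 2 ^ (?k + 3)\<^sup>2)"
      unfolding g_def c_def by (intro mult_left_mono lacunary_term_le) auto
    also have "\<dots> = 2 ^ (?k + (j + 3)\<^sup>2) / 2 ^ (?k + 3)\<^sup>2"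
      unfolding c_def by (simp add: power_add)
    also have "\<dots> \<le> 2 ^ (?k + (j + 3)\<^sup>2) / 2 ^ (?k + (j + 3)\<^sup>2 + (i + 5))"
      by (intro divide_left_mono power_increasing) (auto simp: power2_eq_square algebra_simps)
    also have "\<dots> = (1/2) ^ (i + 5)"
      using power_add[of "2::real" "?k + (j + 3)\<^sup>2" "i + 5"] by (simp add: power_one_over)
    finally show ?thesis .
  qed
  have tail_summable: "summable (\<lambda>i. g (i + Suc j))"
    using g_summable by (rule summable_ignore_initial_segment)
  have "(\<Sum>i. g (i + Suc j)) \<le> (\<Sum>i. (1/2) ^ 5 * (1/2::real) ^ i)"
    by (intro suminf_le tail_summable summable_mult summable_geometric)
      (use tail_term in \<open>simp_all add: power_add mult.commute\<close>)
  also have "\<dots> = (1/2) ^ 5 * (\<Sum>i. (1/2::real) ^ i)"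
    by (rule suminf_mult) (simp add: summable_geometric)
  also have "\<dots> = 1/16"
    using suminf_geometric[of "1/2::real"] by (simp add: power_divide)
  finally have "(\<Sum>i. g (i + Suc j)) \<le> 1/16" .
  moreover have "0 \<le> (\<Sum>i. g (i + Suc j))"
    by (intro suminf_nonneg tail_summable) (simp add: g_def c_def lacunary_term_nonneg)
  ultimately show ?thesis
    using split head that[of I "\<Sum>i. g (i + Suc j)"] by (simp add: c_def)
qed

lemma cos_2pi_near_int:
  assumes "0 \<le> r" "r \<le> 1/16"
  shows "1/2 \<le> cos (2 * pi * (of_int I + r))"
proof -
  have "cos (2 * pi * (of_int I + r)) = cos (2 * pi * r)"
    by (simp add: distrib_left cos_add mult.assoc[symmetric] add.commute)
  also have "cos (pi / 3) \<le> cos (2 * pi * r)"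
    using assms by (intro cos_monotone_0_pi_le) auto
  finally show ?thesis
    by (simp add: cos_60)
qed

lemma lacunary_map_measurable [measurable]: "lacunary_map \<in> borel_measurable borel"
  by (rule borel_measurable_mono[OF mono_lacunary_map])

lemma lacunary_map_measurable_uniform [measurable]:
  "lacunary_map \<in> borel_measurable (uniform_measure lborel {0..1})"
  by (subst measurable_cong_sets[where M' = borel and N' = borel]) auto

lemma real_distribution_uniform_01: "real_distribution (uniform_measure lborel {0..1::real})"
  by (auto intro!: real_distribution.intro prob_space_uniform_measure simp: real_distribution_axioms_def emeasure_lborel_Icc_eq)

lemma real_distribution_lacunary_measure: "real_distribution lacunary_measure"
  unfolding lacunary_measure_def
  by (intro prob_space.real_distribution_distr real_distribution.axioms(1)[OF real_distribution_uniform_01])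
    simp

lemma lacunary_measure_atomless: "measure lacunary_measure {y} = 0"
proof -
  let ?X = "lacunary_map -` {y}"
  have "x = x'" if "x \<in> ?X \<inter> {0..1}" "x' \<in> ?X \<inter> {0..1}" for x x'
    using that lacunary_map_strict_mono[of x x'] lacunary_map_strict_mono[of x' x]
    by (cases x x' rule: linorder_cases) auto
  then have "countable (?X \<inter> {0..1})"
    by (metis countable_empty countable_insert countable_subset equals0I subsetI singletonI)
  then have "emeasure lborel ({0..1} \<inter> ?X) = 0"
    by (simp add: Int_commute countable_imp_null_set_lborel null_setsD1)
  moreover have "?X \<in> sets borel"
    using measurable_sets[OF lacunary_map_measurable, of "{y}"] by simp
  ultimately show ?thesis
    unfolding lacunary_measure_def measure_def by (simp add: emeasure_distr)
qed

lemma mu_int_lacunary_measure_ge: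
  "1/2 \<le> mu_int lacunary_measure x0 (2 ^ (j + 3)\<^sup>2) (\<lambda>u. cos (2 * pi * u - 2 * pi * x0))"
proof -
  interpret U: real_distribution "uniform_measure lborel {0..1::real}"
    by (rule real_distribution_uniform_01)
  have "mu_int lacunary_measure x0 (2 ^ (j + 3)\<^sup>2) (\<lambda>u. cos (2 * pi * u - 2 * pi * x0))
      = (\<integral>x. cos (2 * pi * (2 ^ (j + 3)\<^sup>2 * lacunary_map x)) \<partial>uniform_measure lborel {0..1})"
    unfolding mu_int_def lacunary_measure_def
    by (subst integral_distr) (simp_all add: algebra_simps)
  also have "1/2 \<le> \<dots>"
  proof (rule U.integral_ge_const)
    show "integrable (uniform_measure lborel {0..1}) (\<lambda>x. cos (2 * pi * (2 ^ (j + 3)\<^sup>2 * lacunary_map x)))"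
      by (intro U.integrable_const_bound[where B = 1]) auto
    show "AE x in uniform_measure lborel {0..1}. 1/2 \<le> cos (2 * pi * (2 ^ (j + 3)\<^sup>2 * lacunary_map x))"
      by (intro AE_I2) (metis lacunary_map_near_int cos_2pi_near_int)
  qed
  finally show ?thesis .
qed

lemma filterlim_two_power_square_sequentially:
  "filterlim (\<lambda>j::nat. (2::real) ^ (j + 3)\<^sup>2) at_top sequentially"
proof (rule filterlim_at_top_mono[OF filterlim_real_sequentially always_eventually], intro allI)
  fix j :: nat
  have "real j \<le> 2 ^ j"
    using of_nat_less_two_power[of j, where 'a = real] by simp
  also have "(2::real) ^ j \<le> 2 ^ (j + 3)\<^sup>2"
    by (intro power_increasing) (auto simp: power2_eq_square algebra_simps)
  finally show "real j \<le> 2 ^ (j + 3)\<^sup>2" .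
qed

lemma not_equidistributed_lacunary_measure: "\<not> equidistributed lacunary_measure x0"
proof
  assume "equidistributed lacunary_measure x0"
  define f where "f u = cos (2 * pi * u - 2 * pi * x0)" for u
  have "trig_poly f"
    by (rule trig_poly_cong[OF trig_poly.cos[of 1 "- 2 * pi * x0"]]) (simp add: f_def)
  then have "((\<lambda>t. mu_int lacunary_measure x0 t f) \<longlongrightarrow> haar_int f) at_top"
    using \<open>equidistributed lacunary_measure x0\<close> trig_poly_circle_fun
    unfolding equidistributed_def by blast
  moreover have "haar_int f = 0"
    using haar_int_cos[of 1 "- 2 * pi * x0"] by (simp add: f_def[abs_def])
  ultimately have "(\<lambda>j. mu_int lacunary_measure x0 (2 ^ (j + 3)\<^sup>2) f) \<longlonglongrightarrow> 0"
    using filterlim_compose[OF _ filterlim_two_power_square_sequentially] by simp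
  moreover have "1/2 \<le> mu_int lacunary_measure x0 (2 ^ (j + 3)\<^sup>2) f" for j
    unfolding f_def by (rule mu_int_lacunary_measure_ge)
  ultimately have "1/2 \<le> (0::real)"
    by (intro tendsto_lowerbound[where F = sequentially]) auto
  then show False
    by simp
qed

theorem proposition5p1:
  fixes x0 :: real
  shows "\<exists>\<nu>. prob_space \<nu> \<and> sets \<nu> = sets borel \<and>
           weakly_equidistributed \<nu> x0 \<and> \<not> equidistributed \<nu> x0"
proof (intro exI conjI)
  interpret real_distribution lacunary_measure
    by (rule real_distribution_lacunary_measure)
  show "prob_space lacunary_measure" "sets lacunary_measure = sets borel"
    by (simp_all add: prob_space_axioms)
  show "weakly_equidistributed lacunary_measure x0"
    by (rule weakly_equidistributed_if_atomless[OF lacunary_measure_atomless])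
  show "\<not> equidistributed lacunary_measure x0"
    by (rule not_equidistributed_lacunary_measure)
qed

end
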